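(* Let $G$ be a graph. If $G$ admits a radial subtree model $(T,\mathcal{S})$, then $G$ is a leaf power.
   Context: A subtree model of a graph $G$ is a pair $(T,\mathcal{S})$ where $T$ is a tree and $\mathcal{S}=\{S_v \mid v\in V(G)\}$ is a family of connected subtrees of $T$ such that for any two distinct vertices $u,v$, $S_u\cap S_v\neq\emptyset$ if and only if $uv\in E(G)$. A radial subtree model (RS model) is a subtree model in which for each $v\in V(G)$ there is a node $c_v\in V(T)$ (center) and an integer $r_v\ge 0$ (radius) such that $S_v$ is the subtree of $T$ induced by exactly the nodes at distance at most $r_v$ from $c_v$. For a positive integer $k$, $G$ is a $k$-leaf power if there is a tree $T'$ and a bijection $\tau$ from $V(G)$ to the set of leaves of $T'$ such that distinct $u,v$ are adjacent in $G$ iff $\tau(u),\tau(v)$ are at distance at most $k$ in $T'$. $G$ is a leaf power if it is a $k$-leaf power for some positive integer $k$. *)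

theory Defs
  imports Main
begin

definition graph :: "'a set \<Rightarrow> ('a \<Rightarrow> 'a \<Rightarrow> bool) \<Rightarrow> bool" where
  "graph V E \<longleftrightarrow> finite V \<and> V \<noteq> {}
     \<and> (\<forall>u v. E u v \<longrightarrow> u \<in> V \<and> v \<in> V)
     \<and> (\<forall>u v. E u v \<longrightarrow> E v u) \<and> (\<forall>u. \<not> E u u)"

definition walk :: "('b \<Rightarrow> 'b \<Rightarrow> bool) \<Rightarrow> 'b list \<Rightarrow> bool" where
  "walk E xs \<longleftrightarrow> xs \<noteq> [] \<and> (\<forall>i. Suc i < length xs \<longrightarrow> E (xs ! i) (xs ! Suc i))"

definition path :: "('b \<Rightarrow> 'b \<Rightarrow> bool) \<Rightarrow> 'b list \<Rightarrow> bool" where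
  "path E xs \<longleftrightarrow> walk E xs \<and> distinct xs"

definition tree :: "'b set \<Rightarrow> ('b \<Rightarrow> 'b \<Rightarrow> bool) \<Rightarrow> bool" where
  "tree N E \<longleftrightarrow> graph N E \<and>
     (\<forall>x\<in>N. \<forall>y\<in>N. \<exists>!xs. path E xs \<and> hd xs = x \<and> last xs = y)"

definition tdist :: "('b \<Rightarrow> 'b \<Rightarrow> bool) \<Rightarrow> 'b \<Rightarrow> 'b \<Rightarrow> nat" where
  "tdist E x y = (LEAST n. \<exists>xs. walk E xs \<and> hd xs = x \<and> last xs = y \<and> length xs = Suc n)"

definition subtree :: "'b set \<Rightarrow> ('b \<Rightarrow> 'b \<Rightarrow> bool) \<Rightarrow> 'b set \<Rightarrow> bool" where
  "subtree N E S \<longleftrightarrow> S \<noteq> {} \<and> S \<subseteq> N \<and>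
     (\<forall>x\<in>S. \<forall>y\<in>S. \<exists>xs. walk E xs \<and> hd xs = x \<and> last xs = y \<and> set xs \<subseteq> S)"

definition subtree_model ::
  "'a set \<Rightarrow> ('a \<Rightarrow> 'a \<Rightarrow> bool) \<Rightarrow> 'b set \<Rightarrow> ('b \<Rightarrow> 'b \<Rightarrow> bool) \<Rightarrow> ('a \<Rightarrow> 'b set) \<Rightarrow> bool" where
  "subtree_model V G N E S \<longleftrightarrow> tree N E \<and> (\<forall>v\<in>V. subtree N E (S v)) \<and>
     (\<forall>u\<in>V. \<forall>v\<in>V. u \<noteq> v \<longrightarrow> (S u \<inter> S v \<noteq> {} \<longleftrightarrow> G u v))"

definition radial_subtree_model ::
  "'a set \<Rightarrow> ('a \<Rightarrow> 'a \<Rightarrow> bool) \<Rightarrow> 'b set \<Rightarrow> ('b \<Rightarrow> 'b \<Rightarrow> bool) \<Rightarrow> ('a \<Rightarrow> 'b set) \<Rightarrow> bool" where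
  "radial_subtree_model V G N E S \<longleftrightarrow> subtree_model V G N E S \<and>
     (\<forall>v\<in>V. \<exists>c\<in>N. \<exists>r::nat. S v = {t \<in> N. tdist E c t \<le> r})"

text \<open>Leaves: nodes of degree at most one (so a one-node tree has one leaf).\<close>
definition leaves :: "'b set \<Rightarrow> ('b \<Rightarrow> 'b \<Rightarrow> bool) \<Rightarrow> 'b set" where
  "leaves N E = {x \<in> N. card {y \<in> N. E x y} \<le> 1}"

definition k_leaf_power :: "nat \<Rightarrow> 'a set \<Rightarrow> ('a \<Rightarrow> 'a \<Rightarrow> bool) \<Rightarrow> bool" where
  "k_leaf_power k V G \<longleftrightarrow> (\<exists>(N :: nat set) E \<tau>. tree N E \<and> bij_betw \<tau> V (leaves N E) \<and>
     (\<forall>u\<in>V. \<forall>v\<in>V. u \<noteq> v \<longrightarrow> (G u v \<longleftrightarrow> tdist E (\<tau> u) (\<tau> v) \<le> k)))"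

definition leaf_power :: "'a set \<Rightarrow> ('a \<Rightarrow> 'a \<Rightarrow> bool) \<Rightarrow> bool" where
  "leaf_power V G \<longleftrightarrow> (\<exists>k>0. k_leaf_power k V G)"

end

theory Submission
  imports Defs
begin

(* Write the radial model as balls S v = B(c v, r v) in the tree T. In a tree, two balls meet iff
   the distance of their centres is at most the sum of the radii. Prune T by deleting leaves that
   are not centres; this does not change distances. Then hang from every centre c v a path of
   L + 1 - r v new nodes, where L is the largest radius. The ends of these hairs are exactly the
   leaves of the new tree, and the ends for u and v are at distance
   (L + 1 - r u) + (L + 1 - r v) + d(c u, c v), which is at most 2 L + 2 iff
   d(c u, c v) <= r u + r v, i.e. iff uv is an edge. So G is a (2 L + 2)-leaf power. *)

section \<open>Walks and paths\<close>

lemma walk_Nil [simp]: "\<not> walk E []"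
  by (simp add: walk_def)

lemma walk_single [simp]: "walk E [x]"
  by (simp add: walk_def)

lemma walk_not_Nil: "walk E xs \<Longrightarrow> xs \<noteq> []"
  by (auto simp: walk_def)

lemma walk_Cons_Cons [simp]: "walk E (x # y # xs) \<longleftrightarrow> E x y \<and> walk E (y # xs)"
  unfolding walk_def by (auto simp: less_Suc_eq_0_disj)

lemma walk_Cons: "walk E (x # xs) \<longleftrightarrow> xs = [] \<or> E x (hd xs) \<and> walk E xs"
  by (cases xs) auto

lemma walk_append:
  "xs \<noteq> [] \<Longrightarrow> ys \<noteq> [] \<Longrightarrow> walk E (xs @ ys) \<longleftrightarrow> walk E xs \<and> walk E ys \<and> E (last xs) (hd ys)"
  by (induction xs rule: induct_list012) (auto simp: walk_Cons)

lemma walk_append_tl: "walk E xs \<Longrightarrow> walk E ys \<Longrightarrow> last xs = hd ys \<Longrightarrow> walk E (xs @ tl ys)"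
  using walk_not_Nil[of E xs] by (cases ys rule: remdups_adj.cases) (auto simp: walk_append)

lemma walk_rev: "(\<And>a b. E a b \<Longrightarrow> E b a) \<Longrightarrow> walk E xs \<Longrightarrow> walk E (rev xs)"
proof (induction xs)
  case (Cons a xs)
  then show ?case
    by (cases "xs = []") (auto simp: walk_Cons walk_append last_rev)
qed simp

lemma walk_take: "walk E xs \<Longrightarrow> 0 < n \<Longrightarrow> walk E (take n xs)"
  by (induction xs arbitrary: n) (auto simp: walk_Cons take_Cons' hd_take)

lemma walk_drop: "walk E xs \<Longrightarrow> n < length xs \<Longrightarrow> walk E (drop n xs)"
  by (induction xs arbitrary: n) (auto simp: walk_Cons drop_Cons')

lemma walk_map:
  "walk E xs \<Longrightarrow> (\<And>a b. a \<in> set xs \<Longrightarrow> b \<in> set xs \<Longrightarrow> E a b \<Longrightarrow> E' (f a) (f b)) \<Longrightarrow> walk E' (map f xs)"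
  by (induction xs rule: induct_list012) auto

lemma walk_mono:
  "walk E xs \<Longrightarrow> (\<And>a b. a \<in> set xs \<Longrightarrow> b \<in> set xs \<Longrightarrow> E a b \<Longrightarrow> E' a b) \<Longrightarrow> walk E' xs"
  using walk_map[of E xs E' id] by simp

lemma walk_subset:
  "walk E xs \<Longrightarrow> (\<And>a b. E a b \<Longrightarrow> b \<in> N) \<Longrightarrow> hd xs \<in> N \<Longrightarrow> set xs \<subseteq> N"
  by (induction xs rule: induct_list012) auto

lemma walk_map_upt:
  "a < b \<Longrightarrow> (\<And>i. a \<le> i \<Longrightarrow> Suc i < b \<Longrightarrow> E (g i) (g (Suc i))) \<Longrightarrow> walk E (map g [a..<b])"
proof (induction b rule: less_induct)
  case (less b)
  then show ?case
  proof (cases "Suc a = b")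
    case False
    then obtain c where c: "b = Suc c" "a < c" using less.prems(1) by (cases b) auto
    then have "walk E (map g [a..<c])" using less by auto
    moreover have "E (g (c - 1)) (g c)" using less.prems(2)[of "c - 1"] c by simp
    ultimately show ?thesis using c by (simp add: walk_append last_map)
  qed auto
qed

lemma graphD:
  assumes "graph N E"
  shows "finite N" "N \<noteq> {}" "E a b \<Longrightarrow> a \<in> N" "E a b \<Longrightarrow> b \<in> N" "E a b \<Longrightarrow> E b a" "\<not> E a a"
  using assms unfolding graph_def by blast+

lemma walk_in_graph: "graph N E \<Longrightarrow> walk E xs \<Longrightarrow> hd xs \<in> N \<Longrightarrow> set xs \<subseteq> N"
  using walk_subset[of E xs N] graphD(4)[of N E] by blast

lemma path_not_Nil: "path E xs \<Longrightarrow> xs \<noteq> []"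
  by (auto simp: path_def dest: walk_not_Nil)

lemma path_rev: "graph N E \<Longrightarrow> path E xs \<Longrightarrow> path E (rev xs)"
  by (auto simp: path_def intro: walk_rev dest: graphD)

lemma path_hd_eq_last: "path E xs \<Longrightarrow> hd xs = last xs \<Longrightarrow> xs = [hd xs]"
  by (cases xs rule: rev_cases) (auto simp: path_def hd_append split: if_splits)

lemma unique_path_to_self: "\<exists>!p. path E p \<and> hd p = a \<and> last p = a"
proof (rule ex1I[of _ "[a]"])
  show "path E [a] \<and> hd [a] = a \<and> last [a] = a" by (simp add: path_def)
next
  fix p assume "path E p \<and> hd p = a \<and> last p = a"
  then show "p = [a]" using path_hd_eq_last[of E p] by simp
qed

lemma two_neighbours_not_leaf:
  assumes "finite N" "a \<in> N" "b \<in> N" "a \<noteq> b" "E z a" "E z b"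
  shows "z \<notin> leaves N E"
proof -
  have "card {a, b} \<le> card {y \<in> N. E z y}"
    by (rule card_mono) (use assms in auto)
  then show ?thesis using assms(4) by (simp add: leaves_def)
qed

lemma path_avoids_leaf:
  assumes g: "graph N E" and "path E xs" "l \<in> leaves N E" "hd xs \<noteq> l" "last xs \<noteq> l"
  shows "l \<notin> set xs"
proof
  assume "l \<in> set xs"
  then obtain ys zs where xs: "xs = ys @ l # zs" by (meson split_list)
  then have "ys \<noteq> []" "zs \<noteq> []" using assms(4,5) by auto
  then have nbrs: "E l (last ys)" "E l (hd zs)"
    using assms(2) xs graphD(5)[OF g] by (auto simp: path_def walk_append walk_Cons)
  have "set ys \<inter> set zs = {}" using assms(2) xs by (simp add: path_def)
  then have "last ys \<noteq> hd zs" using \<open>ys \<noteq> []\<close> \<open>zs \<noteq> []\<close>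
    by (metis disjoint_iff last_in_set hd_in_set)
  moreover have "last ys \<in> N" "hd zs \<in> N" using nbrs graphD(4)[OF g] by blast+
  ultimately have "l \<notin> leaves N E"
    using two_neighbours_not_leaf[OF graphD(1)[OF g], of "last ys" "hd zs" E l] nbrs by blast
  then show False using assms(3) by contradiction
qed

section \<open>Distances in trees\<close>

lemma tdist_le_walk:
  assumes "walk E xs"
  shows "tdist E (hd xs) (last xs) \<le> length xs - 1"
proof -
  have "length xs = Suc (length xs - 1)" using walk_not_Nil[OF assms] by simp
  then have "\<exists>ws. walk E ws \<and> hd ws = hd xs \<and> last ws = last xs \<and> length ws = Suc (length xs - 1)"
    using assms by metis
  then show ?thesis unfolding tdist_def by (rule Least_le)
qed

lemma shortest_walk:
  assumes "walk E xs"
  obtains ws where "walk E ws" "hd ws = hd xs" "last ws = last xs"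
    "length ws = Suc (tdist E (hd xs) (last xs))"
proof -
  have "length xs = Suc (length xs - 1)" using walk_not_Nil[OF assms] by simp
  then have "\<exists>ws. walk E ws \<and> hd ws = hd xs \<and> last ws = last xs \<and> length ws = Suc (length xs - 1)"
    using assms by metis
  then have "\<exists>ws. walk E ws \<and> hd ws = hd xs \<and> last ws = last xs \<and> length ws = Suc (tdist E (hd xs) (last xs))"
    unfolding tdist_def by (rule LeastI)
  then show ?thesis using that by blast
qed

lemma walk_shortcut:
  "walk E ws \<Longrightarrow> \<exists>ps. path E ps \<and> hd ps = hd ws \<and> last ps = last ws \<and> length ps \<le> length ws"
proof (induction "length ws" arbitrary: ws rule: less_induct)
  case less
  show ?case
  proof (cases "distinct ws")
    case True
    then show ?thesis using less.prems by (auto simp: path_def)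
  next
    case False
    then obtain xs ys zs y where ws: "ws = xs @ [y] @ ys @ [y] @ zs"
      using not_distinct_decomp by blast
    let ?ws' = "xs @ [y] @ zs"
    have "walk E (xs @ [y])" using walk_take[OF less.prems, of "Suc (length xs)"] ws by simp
    moreover have "walk E (y # zs)"
      using walk_drop[OF less.prems, of "Suc (length xs + length ys)"] ws by simp
    ultimately have "walk E ?ws'" using walk_append_tl[of E "xs @ [y]" "y # zs"] by simp
    moreover have "hd ?ws' = hd ws" "last ?ws' = last ws" using ws by (cases xs; cases zs rule: rev_cases; simp)+
    ultimately show ?thesis using less.hyps[of ?ws'] ws by fastforce
  qed
qed

lemma tree_graph: "tree N E \<Longrightarrow> graph N E"
  by (simp add: tree_def)

lemma tree_path_exists:
  "tree N E \<Longrightarrow> x \<in> N \<Longrightarrow> y \<in> N \<Longrightarrow> \<exists>p. path E p \<and> hd p = x \<and> last p = y"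
  unfolding tree_def by blast

lemma tree_path_unique:
  "tree N E \<Longrightarrow> x \<in> N \<Longrightarrow> y \<in> N \<Longrightarrow> path E p \<Longrightarrow> hd p = x \<Longrightarrow> last p = y \<Longrightarrow>
    path E q \<Longrightarrow> hd q = x \<Longrightarrow> last q = y \<Longrightarrow> p = q"
  unfolding tree_def by blast

lemma tree_intro:
  assumes "graph N E"
    and "\<And>x y. x \<in> N \<Longrightarrow> y \<in> N \<Longrightarrow> \<exists>p. path E p \<and> hd p = x \<and> last p = y"
    and "\<And>x y p q. x \<in> N \<Longrightarrow> y \<in> N \<Longrightarrow> path E p \<Longrightarrow> hd p = x \<Longrightarrow> last p = y \<Longrightarrow>
       path E q \<Longrightarrow> hd q = x \<Longrightarrow> last q = y \<Longrightarrow> p = q"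
  shows "tree N E"
  unfolding tree_def using assms by metis

lemma path_last_in_graph:
  "graph N E \<Longrightarrow> path E p \<Longrightarrow> hd p \<in> N \<Longrightarrow> last p \<in> N"
  using walk_in_graph[of N E p] path_not_Nil[of E p] by (auto simp: path_def)

lemma tdist_path:
  assumes T: "tree N E" and p: "path E p" "hd p \<in> N"
  shows "tdist E (hd p) (last p) = length p - 1"
proof -
  have walk: "walk E p" using p(1) by (simp add: path_def)
  obtain ws where ws: "walk E ws" "hd ws = hd p" "last ws = last p"
    "length ws = Suc (tdist E (hd p) (last p))"
    using shortest_walk[OF walk] .
  obtain q where q: "path E q" "hd q = hd p" "last q = last p" "length q \<le> length ws"
    using walk_shortcut[OF ws(1)] ws by auto
  have "last p \<in> N" using path_last_in_graph[OF tree_graph[OF T] p] .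
  then have "q = p" using tree_path_unique[OF T p(2) _ q(1-3) p(1)] by simp
  then show ?thesis using tdist_le_walk[OF walk] ws q by simp
qed

lemma tdist_sym:
  assumes T: "tree N E" and "x \<in> N" "y \<in> N"
  shows "tdist E x y = tdist E y x"
proof -
  obtain p where p: "path E p" "hd p = x" "last p = y"
    using tree_path_exists[OF assms] by blast
  have "p \<noteq> []" using path_not_Nil[OF p(1)] .
  then have "path E (rev p)" "hd (rev p) = y" "last (rev p) = x"
    using path_rev[OF tree_graph[OF T] p(1)] p by (simp_all add: hd_rev last_rev)
  then show ?thesis using tdist_path[OF T] p assms by (metis length_rev)
qed

lemma tdist_triangle:
  assumes T: "tree N E" and "x \<in> N" "y \<in> N" "z \<in> N"
  shows "tdist E x z \<le> tdist E x y + tdist E y z"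
proof -
  obtain p where p: "path E p" "hd p = x" "last p = y"
    using tree_path_exists[OF T] assms by blast
  obtain q where q: "path E q" "hd q = y" "last q = z"
    using tree_path_exists[OF T] assms by blast
  obtain a where a: "walk E a" "hd a = x" "last a = y" "length a = Suc (tdist E x y)"
    using shortest_walk[of E p] p by (auto simp: path_def)
  obtain b where b: "walk E b" "hd b = y" "last b = z" "length b = Suc (tdist E y z)"
    using shortest_walk[of E q] q by (auto simp: path_def)
  have "walk E (a @ tl b)" using walk_append_tl[OF a(1) b(1)] a b by simp
  moreover have "hd (a @ tl b) = x" "last (a @ tl b) = z"
    using a b walk_not_Nil[OF a(1)] by (cases b rule: remdups_adj.cases; simp)+
  ultimately have "tdist E x z \<le> length (a @ tl b) - 1" using tdist_le_walk by metis
  then show ?thesis using a b by simp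
qed

lemma tree_has_neighbour:
  assumes T: "tree N E" and "2 \<le> card N" "x \<in> N"
  obtains y where "E x y"
proof -
  have "\<not> N \<subseteq> {x}" using card_mono[of "{x}" N] assms(2) by auto
  then obtain z where z: "z \<in> N" "z \<noteq> x" by blast
  obtain p where p: "path E p" "hd p = x" "last p = z"
    using tree_path_exists[OF T assms(3) z(1)] by blast
  then obtain p' where "p = x # p'" "p' \<noteq> []"
    using path_not_Nil[OF p(1)] z(2) by (cases p) (auto split: if_splits)
  then show ?thesis using p(1) that by (auto simp: path_def walk_Cons)
qed

lemma tree_balls_intersect_iff:
  assumes T: "tree N E" and ab: "a \<in> N" "b \<in> N"
  shows "{t \<in> N. tdist E a t \<le> r} \<inter> {t \<in> N. tdist E b t \<le> s} \<noteq> {} \<longleftrightarrow> tdist E a b \<le> r + s"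
proof
  assume "{t \<in> N. tdist E a t \<le> r} \<inter> {t \<in> N. tdist E b t \<le> s} \<noteq> {}"
  then obtain t where t: "t \<in> N" "tdist E a t \<le> r" "tdist E b t \<le> s" by blast
  then show "tdist E a b \<le> r + s"
    using tdist_triangle[OF T ab(1) t(1) ab(2)] tdist_sym[OF T t(1) ab(2)] by linarith
next
  assume d: "tdist E a b \<le> r + s"
  obtain p where "path E p" "hd p = a" "last p = b" using tree_path_exists[OF T ab] by blast
  then obtain ws where ws: "walk E ws" "hd ws = a" "last ws = b" "length ws = Suc (tdist E a b)"
    using shortest_walk[of E p] by (auto simp: path_def)
  define i where "i = min r (tdist E a b)"
  define t where "t = ws ! i"
  have i: "i < length ws" using ws by (simp add: i_def)
  have "t \<in> N" using walk_in_graph[OF tree_graph[OF T] ws(1)] ws(2) ab i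
    unfolding t_def by (auto simp: subset_iff)
  have "last (take (Suc i) ws) = t"
    using i unfolding t_def by (subst last_conv_nth) (auto simp: min_def intro: arg_cong[of _ _ "(!) ws"])
  then have "tdist E a t \<le> r"
    using tdist_le_walk[OF walk_take[OF ws(1), of "Suc i"]] ws i by (simp add: i_def)
  moreover have "tdist E t b \<le> s"
    using tdist_le_walk[OF walk_drop[OF ws(1) i]] ws i d
    by (simp add: t_def i_def hd_drop_conv_nth)
  ultimately show "{t \<in> N. tdist E a t \<le> r} \<inter> {t \<in> N. tdist E b t \<le> s} \<noteq> {}"
    using \<open>t \<in> N\<close> tdist_sym[OF T \<open>t \<in> N\<close> ab(2)] by auto
qed

section \<open>Growing, pruning and relabelling trees\<close>

definition attach_edges :: "('b \<Rightarrow> 'b \<Rightarrow> bool) \<Rightarrow> 'b set \<Rightarrow> ('b \<Rightarrow> 'b) \<Rightarrow> 'b \<Rightarrow> 'b \<Rightarrow> bool" where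
  "attach_edges E X par a b \<longleftrightarrow> E a b \<or> (a \<in> X \<and> b = par a) \<or> (b \<in> X \<and> a = par b)"

lemma unique_path_rev:
  assumes "graph N E" "\<exists>!p. path E p \<and> hd p = a \<and> last p = b"
  shows "\<exists>!p. path E p \<and> hd p = b \<and> last p = a"
proof -
  have rev_iff: "path E (rev p) \<and> hd (rev p) = a \<and> last (rev p) = b \<longleftrightarrow> path E p \<and> hd p = b \<and> last p = a"
    for p
    using path_rev[OF assms(1), of p] path_rev[OF assms(1), of "rev p"]
      path_not_Nil[of E p] path_not_Nil[of E "rev p"]
    by (auto simp: hd_rev last_rev)
  obtain p where p: "path E p \<and> hd p = a \<and> last p = b"
    and uniq: "\<And>q. path E q \<and> hd q = a \<and> last q = b \<Longrightarrow> q = p"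
    using assms(2) by blast
  show ?thesis
  proof (rule ex1I[of _ "rev p"])
    show "path E (rev p) \<and> hd (rev p) = b \<and> last (rev p) = a" using rev_iff[of "rev p"] p by simp
  next
    fix q assume "path E q \<and> hd q = b \<and> last q = a"
    then have "rev q = p" using uniq rev_iff[of q] by blast
    then show "q = rev p" by auto
  qed
qed

context
  fixes N :: "'b set" and E :: "'b \<Rightarrow> 'b \<Rightarrow> bool" and par :: "'b \<Rightarrow> 'b" and y :: 'b
  assumes g: "graph N E" and par: "par y \<in> N" and new: "y \<notin> N"
begin

lemma graph_attach_leaf: "graph (insert y N) (attach_edges E {y} par)"
  using g par new unfolding graph_def attach_edges_def by auto

lemma neighbours_attach_leaf: "{z \<in> insert y N. attach_edges E {y} par y z} = {par y}"
  using par new graphD(3)[OF g] unfolding attach_edges_def by auto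

lemma path_attach_leaf_iff:
  assumes "hd p \<in> N" "last p \<in> N"
  shows "path (attach_edges E {y} par) p \<longleftrightarrow> path E p"
proof
  assume p: "path (attach_edges E {y} par) p"
  have "y \<in> leaves (insert y N) (attach_edges E {y} par)"
    using neighbours_attach_leaf by (simp add: leaves_def)
  then have "y \<notin> set p" using path_avoids_leaf[OF graph_attach_leaf p] assms new by auto
  moreover have "set p \<subseteq> insert y N" using walk_in_graph[OF graph_attach_leaf] p assms by (auto simp: path_def)
  ultimately show "path E p" using p new
    by (auto simp: path_def attach_edges_def intro: walk_mono)
next
  assume "path E p"
  then show "path (attach_edges E {y} par) p"
    using walk_in_graph[OF g, of p] assms by (auto simp: path_def attach_edges_def intro: walk_mono)
qed

lemma path_from_attached_leaf:
  assumes b: "b \<in> N"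
  shows "path (attach_edges E {y} par) p \<and> hd p = y \<and> last p = b \<longleftrightarrow>
    (\<exists>q. p = y # q \<and> path E q \<and> hd q = par y \<and> last q = b)"
proof
  assume p: "path (attach_edges E {y} par) p \<and> hd p = y \<and> last p = b"
  then obtain q where q: "p = y # q" "q \<noteq> []"
    using path_not_Nil[of _ p] b new by (cases p) (auto split: if_splits)
  then have e: "attach_edges E {y} par y (hd q)" "path (attach_edges E {y} par) q"
    using p by (auto simp: path_def walk_Cons)
  then have "hd q \<in> {z \<in> insert y N. attach_edges E {y} par y z}"
    using graphD(4)[OF graph_attach_leaf] by blast
  then have "hd q = par y" using neighbours_attach_leaf by blast
  moreover have "last q = b" using p q by simp
  ultimately show "\<exists>q. p = y # q \<and> path E q \<and> hd q = par y \<and> last q = b"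
    using q path_attach_leaf_iff[of q] e(2) par b by auto
next
  assume "\<exists>q. p = y # q \<and> path E q \<and> hd q = par y \<and> last q = b"
  then obtain q where q: "p = y # q" "path E q" "hd q = par y" "last q = b" by blast
  have "path (attach_edges E {y} par) q" using path_attach_leaf_iff[of q] q par b by simp
  moreover have "set q \<subseteq> N" using walk_in_graph[OF g] q par by (auto simp: path_def)
  ultimately show "path (attach_edges E {y} par) p \<and> hd p = y \<and> last p = b"
    using q new path_not_Nil[OF q(2)] by (auto simp: path_def walk_Cons attach_edges_def)
qed

lemma unique_path_from_attached_leaf:
  assumes T: "tree N E" and b: "b \<in> N"
  shows "\<exists>!p. path (attach_edges E {y} par) p \<and> hd p = y \<and> last p = b"
proof -
  obtain q where q: "path E q \<and> hd q = par y \<and> last q = b"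
    and uniq: "\<And>q'. path E q' \<and> hd q' = par y \<and> last q' = b \<Longrightarrow> q' = q"
    using T par b unfolding tree_def by blast
  show ?thesis unfolding path_from_attached_leaf[OF b]
    by (rule ex1I[of _ "y # q"]) (use q uniq in blast)+
qed

lemma unique_path_attach_leaf:
  assumes T: "tree N E" and ab: "a \<in> N" "b \<in> N"
  shows "\<exists>!p. path (attach_edges E {y} par) p \<and> hd p = a \<and> last p = b"
proof -
  obtain p where p: "path E p \<and> hd p = a \<and> last p = b"
    and uniq: "\<And>q. path E q \<and> hd q = a \<and> last q = b \<Longrightarrow> q = p"
    using T ab unfolding tree_def by blast
  show ?thesis
  proof (rule ex1I[of _ p])
    show "path (attach_edges E {y} par) p \<and> hd p = a \<and> last p = b"
      using p path_attach_leaf_iff[of p] ab by simp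
  next
    fix q assume "path (attach_edges E {y} par) q \<and> hd q = a \<and> last q = b"
    then show "q = p" using uniq[of q] path_attach_leaf_iff[of q] ab by simp
  qed
qed

lemma tree_attach_leaf:
  assumes T: "tree N E"
  shows "tree (insert y N) (attach_edges E {y} par)"
proof -
  have "\<exists>!p. path (attach_edges E {y} par) p \<and> hd p = a \<and> last p = b"
    if ab: "a \<in> insert y N" "b \<in> insert y N" for a b
  proof -
    consider "a = y" "b = y" | "a = y" "b \<in> N" | "a \<in> N" "b = y" | "a \<in> N" "b \<in> N"
      using ab by blast
    then show ?thesis
    proof cases
      case 1
      then show ?thesis using unique_path_to_self by simp
    next
      case 2
      then show ?thesis using unique_path_from_attached_leaf[OF T] by simp
    next
      case 3
      then show ?thesis
        using unique_path_rev[OF graph_attach_leaf unique_path_from_attached_leaf[OF T, of a]] by simp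
    next
      case 4
      then show ?thesis using unique_path_attach_leaf[OF T] by simp
    qed
  qed
  then show ?thesis using graph_attach_leaf unfolding tree_def by blast
qed

end

lemma attach_edges_insert:
  "attach_edges E (insert x S) par = attach_edges (attach_edges E S par) {x} par"
  by (auto simp: attach_edges_def fun_eq_iff)

(* Attaching the nodes of X in order of increasing rank, every step adds a single leaf. *)
lemma tree_attach:
  fixes rk :: "'b \<Rightarrow> nat"
  assumes T: "tree N E" and "finite X" and "X \<inter> N = {}"
    and "\<And>z. z \<in> X \<Longrightarrow> par z \<in> N \<union> X" and "\<And>z. z \<in> X \<Longrightarrow> par z \<in> X \<Longrightarrow> rk (par z) < rk z"
  shows "tree (N \<union> X) (attach_edges E X par)"
  using assms(2-5)
proof (induction X rule: finite_ranking_induct[where f = rk])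
  case empty
  then show ?case using T by (simp add: attach_edges_def)
next
  case (insert x S)
  show ?case
  proof (cases "x \<in> S")
    case True
    then have eq: "insert x S = S" by blast
    show ?thesis using insert.prems unfolding eq by (rule insert.IH)
  next
    case False
    have "par z \<noteq> x" if "z \<in> S" for z
    proof
      assume "par z = x"
      then have "rk x < rk z" using insert.prems(3)[of z] that by simp
      then show False using insert.hyps(2)[OF that] by simp
    qed
    then have "par z \<in> N \<union> S" if "z \<in> S" for z
      using insert.prems(2)[of z] that by blast
    moreover have "rk (par z) < rk z" if "z \<in> S" "par z \<in> S" for z
      using insert.prems(3)[of z] that by blast
    moreover have "S \<inter> N = {}" using insert.prems(1) by blast
    ultimately have TS: "tree (N \<union> S) (attach_edges E S par)" by (intro insert.IH)
    have "par x \<in> N \<union> S" "x \<notin> N \<union> S"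
      using insert.prems(1) insert.prems(2,3)[of x] False by auto
    then have "tree (insert x (N \<union> S)) (attach_edges (attach_edges E S par) {x} par)"
      using tree_attach_leaf[OF tree_graph[OF TS] _ _ TS] by blast
    moreover have "insert x (N \<union> S) = N \<union> insert x S" by blast
    ultimately show ?thesis by (simp only: attach_edges_insert[of E x S par])
  qed
qed

definition induced :: "('b \<Rightarrow> 'b \<Rightarrow> bool) \<Rightarrow> 'b set \<Rightarrow> 'b \<Rightarrow> 'b \<Rightarrow> bool" where
  "induced E A a b \<longleftrightarrow> E a b \<and> a \<in> A \<and> b \<in> A"

lemma induced_induced: "B \<subseteq> A \<Longrightarrow> induced (induced E A) B = induced E B"
  by (auto simp: induced_def fun_eq_iff)

lemma induced_tree_self: "tree N E \<Longrightarrow> induced E N = E"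
  by (auto simp: induced_def fun_eq_iff dest: tree_graph graphD)

lemma path_induced: "path (induced E A) p \<Longrightarrow> path E p"
  by (auto simp: path_def induced_def intro: walk_mono)

lemma tdist_induced:
  assumes T: "tree N E" and T': "tree A (induced E A)" and "A \<subseteq> N" "x \<in> A" "y \<in> A"
  shows "tdist (induced E A) x y = tdist E x y"
proof -
  obtain p where p: "path (induced E A) p" "hd p = x" "last p = y"
    using tree_path_exists[OF T'] assms by blast
  then show ?thesis
    using tdist_path[OF T' p(1)] tdist_path[OF T path_induced[OF p(1)]] assms by auto
qed

lemma tree_delete_leaf:
  assumes T: "tree N E" and l: "l \<in> leaves N E" and "2 \<le> card N"
  shows "tree (N - {l}) (induced E (N - {l}))"
proof (rule tree_intro)
  have g: "graph N E" using T by (rule tree_graph)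
  have "N \<noteq> {l}" using assms(3) by auto
  then show "graph (N - {l}) (induced E (N - {l}))"
    using g l unfolding graph_def induced_def leaves_def by auto
  fix x y assume xy: "x \<in> N - {l}" "y \<in> N - {l}"
  have "path (induced E (N - {l})) p" if p: "path E p" "hd p = x" "last p = y" for p
  proof -
    have "l \<notin> set p" using path_avoids_leaf[OF g p(1) l] xy p by auto
    moreover have "set p \<subseteq> N" using walk_in_graph[OF g] p xy by (auto simp: path_def)
    ultimately show ?thesis
      using p(1) by (auto simp: path_def induced_def intro!: walk_mono[where E = E])
  qed
  then show "\<exists>p. path (induced E (N - {l})) p \<and> hd p = x \<and> last p = y"
    using tree_path_exists[OF T] xy by blast
  fix p q assume "path (induced E (N - {l})) p" "hd p = x" "last p = y"
    "path (induced E (N - {l})) q" "hd q = x" "last q = y"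
  then show "p = q" using tree_path_unique[OF T] path_induced xy by blast
qed

lemma tree_prune:
  assumes "tree N E" "C \<subseteq> N"
  obtains N0 where "C \<subseteq> N0" "N0 \<subseteq> N" "tree N0 (induced E N0)"
    "2 \<le> card N0 \<Longrightarrow> leaves N0 (induced E N0) \<subseteq> C"
  using assms
proof (induction "card N" arbitrary: N E thesis rule: less_induct)
  case less
  show ?case
  proof (cases "2 \<le> card N \<and> \<not> leaves N E \<subseteq> C")
    case True
    then obtain l where l: "l \<in> leaves N E" "l \<notin> C" and card: "2 \<le> card N" by blast
    have "finite N" using graphD(1)[OF tree_graph[OF less.prems(2)]] .
    moreover have "l \<in> N" using l(1) by (simp add: leaves_def)
    ultimately have "card (N - {l}) < card N" by (rule card_Diff1_less)
    moreover have "tree (N - {l}) (induced E (N - {l}))"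
      using tree_delete_leaf[OF less.prems(2) l(1) card] .
    moreover have "C \<subseteq> N - {l}" using less.prems(3) l(2) by blast
    ultimately obtain N0 where N0: "C \<subseteq> N0" "N0 \<subseteq> N - {l}" "tree N0 (induced (induced E (N - {l})) N0)"
      "2 \<le> card N0 \<Longrightarrow> leaves N0 (induced (induced E (N - {l})) N0) \<subseteq> C"
      using less.hyps by metis
    have "induced (induced E (N - {l})) N0 = induced E N0" using N0(2) by (rule induced_induced)
    then show ?thesis using less.prems(1)[of N0] N0 by auto
  next
    case False
    then show ?thesis
      using less.prems by (intro less.prems(1)[of N]) (auto simp: induced_tree_self)
  qed
qed

definition image_edges :: "('b \<Rightarrow> 'c) \<Rightarrow> 'b set \<Rightarrow> ('b \<Rightarrow> 'b \<Rightarrow> bool) \<Rightarrow> 'c \<Rightarrow> 'c \<Rightarrow> bool" where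
  "image_edges f N E a b \<longleftrightarrow> (\<exists>x\<in>N. \<exists>y\<in>N. a = f x \<and> b = f y \<and> E x y)"

lemma image_edges_iff:
  assumes "inj_on f N" "x \<in> N" "y \<in> N"
  shows "image_edges f N E (f x) (f y) \<longleftrightarrow> E x y"
proof
  assume "image_edges f N E (f x) (f y)"
  then obtain x' y' where "x' \<in> N" "y' \<in> N" "f x = f x'" "f y = f y'" "E x' y'"
    unfolding image_edges_def by blast
  then show "E x y" using inj_onD[OF assms(1)] assms(2,3) by metis
qed (use assms in \<open>auto simp: image_edges_def\<close>)

lemma graph_image:
  assumes g: "graph N E" and inj: "inj_on f N"
  shows "graph (f ` N) (image_edges f N E)"
  unfolding graph_def
proof (intro conjI allI impI)
  show "finite (f ` N)" "f ` N \<noteq> {}" using graphD(1,2)[OF g] by auto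
  fix u v assume "image_edges f N E u v"
  then obtain x y where xy: "x \<in> N" "y \<in> N" "u = f x" "v = f y" "E x y"
    unfolding image_edges_def by blast
  then show "u \<in> f ` N" "v \<in> f ` N" by auto
  show "image_edges f N E v u" using xy graphD(5)[OF g] unfolding image_edges_def by blast
next
  fix u show "\<not> image_edges f N E u u"
    using graphD(6)[OF g] inj_onD[OF inj] unfolding image_edges_def by metis
qed

lemma path_map_image:
  assumes "inj_on f N" "path E p" "set p \<subseteq> N"
  shows "path (image_edges f N E) (map f p)"
proof -
  have "walk E p" using assms(2) by (simp add: path_def)
  then have "walk (image_edges f N E) (map f p)"
    by (rule walk_map) (use assms(3) in \<open>unfold image_edges_def, blast\<close>)
  moreover have "distinct (map f p)"
    using assms(2) inj_on_subset[OF assms(1,3)] by (simp add: path_def distinct_map)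
  ultimately show ?thesis by (simp add: path_def)
qed

lemma path_image_lift:
  assumes g: "graph N E" and inj: "inj_on f N" and q: "path (image_edges f N E) q" "hd q \<in> f ` N"
  obtains p where "q = map f p" "path E p" "set p \<subseteq> N"
proof
  let ?g = "inv_into N f"
  have sq: "set q \<subseteq> f ` N" using walk_in_graph[OF graph_image[OF g inj]] q by (auto simp: path_def)
  then show "q = map f (map ?g q)" by (simp add: map_idI f_inv_into_f subset_iff)
  show "set (map ?g q) \<subseteq> N" using sq by (auto intro: inv_into_into)
  have "walk E (map ?g q)"
    using q(1) by (auto simp: path_def image_edges_def inv_into_f_f[OF inj] intro!: walk_map)
  moreover have "distinct (map ?g q)"
    using q(1) inj_on_inv_into[OF sq] by (simp add: path_def distinct_map)
  ultimately show "path E (map ?g q)" by (simp add: path_def)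
qed

lemma tree_image:
  assumes T: "tree N E" and inj: "inj_on f N"
  shows "tree (f ` N) (image_edges f N E)"
proof (rule tree_intro)
  have g: "graph N E" using T by (rule tree_graph)
  show "graph (f ` N) (image_edges f N E)" using graph_image[OF g inj] .
  fix a b assume "a \<in> f ` N" "b \<in> f ` N"
  then obtain x y where xy: "x \<in> N" "y \<in> N" "a = f x" "b = f y" by blast
  then obtain p where p: "path E p" "hd p = x" "last p = y" using tree_path_exists[OF T] by blast
  moreover have "set p \<subseteq> N" using walk_in_graph[OF g] p xy by (auto simp: path_def)
  ultimately show "\<exists>q. path (image_edges f N E) q \<and> hd q = a \<and> last q = b"
    using path_map_image[OF inj p(1)] path_not_Nil[OF p(1)] xy by (auto simp: hd_map last_map)
  fix q q' assume q: "path (image_edges f N E) q" "hd q = a" "last q = b"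
    and q': "path (image_edges f N E) q'" "hd q' = a" "last q' = b"
  obtain p where p: "q = map f p" "path E p" "set p \<subseteq> N"
    using path_image_lift[OF g inj q(1)] q(2) xy by blast
  obtain p' where p': "q' = map f p'" "path E p'" "set p' \<subseteq> N"
    using path_image_lift[OF g inj q'(1)] q'(2) xy by blast
  have "p \<noteq> []" "p' \<noteq> []" using p(2) p'(2) by (simp_all add: path_not_Nil)
  then have "hd p \<in> N" "last p \<in> N" "hd p' \<in> N" "last p' \<in> N"
    "f (hd p) = f x" "f (last p) = f y" "f (hd p') = f x" "f (last p') = f y"
    using p p' q q' xy by (auto simp: hd_map last_map)
  then have "hd p = x" "last p = y" "hd p' = x" "last p' = y"
    using inj_onD[OF inj] xy by metis+
  then show "q = q'" using tree_path_unique[OF T xy(1,2) p(2) _ _ p'(2)] p p' by simp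
qed

lemma tdist_image:
  assumes T: "tree N E" and inj: "inj_on f N" and "x \<in> N" "y \<in> N"
  shows "tdist (image_edges f N E) (f x) (f y) = tdist E x y"
proof -
  have g: "graph N E" using T by (rule tree_graph)
  obtain p where p: "path E p" "hd p = x" "last p = y" using tree_path_exists[OF T] assms by blast
  moreover have "set p \<subseteq> N" using walk_in_graph[OF g] p assms by (auto simp: path_def)
  ultimately show ?thesis
    using tdist_path[OF T p(1)] tdist_path[OF tree_image[OF T inj] path_map_image[OF inj p(1)]]
      path_not_Nil[OF p(1)] assms by (auto simp: hd_map last_map)
qed

lemma leaves_image:
  assumes "inj_on f N"
  shows "leaves (f ` N) (image_edges f N E) = f ` leaves N E"
proof -
  have "{b \<in> f ` N. image_edges f N E (f x) b} = f ` {y \<in> N. E x y}" if "x \<in> N" for x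
    by (auto simp: image_edges_iff[OF assms that])
  moreover have "card (f ` {y \<in> N. E x y}) = card {y \<in> N. E x y}" for x
    by (rule card_image, rule inj_on_subset[OF assms]) blast
  ultimately show ?thesis unfolding leaves_def by auto
qed

section \<open>Trees with hairs\<close>

(* The tree N E with a pendant path of p v new nodes Inr (v, 1), ..., Inr (v, p v), its hair,
   hung from the centre c v of every v in V; the old nodes are tagged with Inl. *)
locale hairy_tree =
  fixes N :: "'b set" and E :: "'b \<Rightarrow> 'b \<Rightarrow> bool" and V :: "'a set"
    and c :: "'a \<Rightarrow> 'b" and p :: "'a \<Rightarrow> nat"
  assumes tree: "tree N E" and finite_V: "finite V"
    and centre_in: "v \<in> V \<Longrightarrow> c v \<in> N" and hair_pos: "v \<in> V \<Longrightarrow> 1 \<le> p v"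
begin

definition hairs :: "('b + 'a \<times> nat) set" where
  "hairs = {Inr (v, i) | v i. v \<in> V \<and> 1 \<le> i \<and> i \<le> p v}"

(* Only the values on hairs matter. *)
fun parent :: "'b + 'a \<times> nat \<Rightarrow> 'b + 'a \<times> nat" where
  "parent (Inl t) = Inl t"
| "parent (Inr (v, i)) = (if i \<le> 1 then Inl (c v) else Inr (v, i - 1))"

definition nodes :: "('b + 'a \<times> nat) set" where
  "nodes = Inl ` N \<union> hairs"

definition edges :: "'b + 'a \<times> nat \<Rightarrow> 'b + 'a \<times> nat \<Rightarrow> bool" where
  "edges = attach_edges (image_edges Inl N E) hairs parent"

definition tip :: "'a \<Rightarrow> 'b + 'a \<times> nat" where
  "tip v = Inr (v, p v)"

lemma Inr_in_hairs [simp]: "Inr (v, i) \<in> hairs \<longleftrightarrow> v \<in> V \<and> 1 \<le> i \<and> i \<le> p v"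
  by (simp add: hairs_def)

lemma Inl_notin_hairs [simp]: "Inl t \<notin> hairs"
  by (simp add: hairs_def)

lemma hairs_cases:
  assumes "z \<in> hairs"
  obtains v i where "z = Inr (v, i)" "v \<in> V" "1 \<le> i" "i \<le> p v"
  using assms by (auto simp: hairs_def)

lemma finite_hairs: "finite hairs"
proof -
  have "hairs \<subseteq> (\<Union>v\<in>V. (\<lambda>i. Inr (v, i)) ` {1..p v})" by (auto simp: hairs_def)
  then show ?thesis by (rule finite_subset) (simp add: finite_V)
qed

lemma parent_in_nodes: "z \<in> hairs \<Longrightarrow> parent z \<in> nodes"
  by (auto elim!: hairs_cases simp: nodes_def centre_in)

lemma tree_nodes: "tree nodes edges"
  unfolding nodes_def edges_def
proof (rule tree_attach[where rk = "case_sum (\<lambda>_. 0) snd"])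
  show "tree (Inl ` N) (image_edges Inl N E)" by (rule tree_image[OF tree]) simp
  show "finite hairs" by (rule finite_hairs)
  show "hairs \<inter> Inl ` N = {}" by auto
  fix z assume "z \<in> hairs"
  then show "parent z \<in> Inl ` N \<union> hairs" using parent_in_nodes by (simp add: nodes_def)
  show "parent z \<in> hairs \<Longrightarrow> case_sum (\<lambda>_. 0) snd (parent z) < case_sum (\<lambda>_. 0) snd z"
    using \<open>z \<in> hairs\<close> by (auto elim!: hairs_cases split: if_splits)
qed

lemma edges_Inl_Inl: "s \<in> N \<Longrightarrow> t \<in> N \<Longrightarrow> edges (Inl s) (Inl t) \<longleftrightarrow> E s t"
  by (simp add: edges_def attach_edges_def image_edges_iff)

lemma edges_parent: "z \<in> hairs \<Longrightarrow> edges z (parent z)" "z \<in> hairs \<Longrightarrow> edges (parent z) z"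
  by (simp_all add: edges_def attach_edges_def)

definition hair :: "'a \<Rightarrow> ('b + 'a \<times> nat) list" where
  "hair w = map (\<lambda>i. Inr (w, i)) [1..<Suc (p w)]"

lemma hair_path:
  assumes "w \<in> V"
  shows "walk edges (hair w)" "distinct (hair w)" "hd (hair w) = Inr (w, 1)" "last (hair w) = tip w"
    "length (hair w) = p w" "set (hair w) = {Inr (w, i) | i. 1 \<le> i \<and> i \<le> p w}" "hair w \<noteq> []"
proof -
  have pos: "1 \<le> p w" using hair_pos[OF assms] .
  show "walk edges (hair w)" unfolding hair_def
  proof (rule walk_map_upt)
    fix i assume "1 \<le> i" "Suc i < Suc (p w)"
    then show "edges (Inr (w, i)) (Inr (w, Suc i))"
      using edges_parent(2)[of "Inr (w, Suc i)"] assms by simp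
  qed (use pos in simp)
  show "hd (hair w) = Inr (w, 1)" using pos by (simp add: hair_def upt_rec)
  show "last (hair w) = tip w" using pos by (simp add: hair_def tip_def last_map)
  show "hair w \<noteq> []" using pos by (simp add: hair_def)
qed (auto simp: hair_def distinct_map inj_on_def)

lemma tdist_tips:
  assumes uv: "u \<in> V" "v \<in> V" "u \<noteq> v"
  shows "tdist edges (tip u) (tip v) = p u + p v + tdist E (c u) (c v)"
proof -
  obtain P where P: "path E P" "hd P = c u" "last P = c v"
    using tree_path_exists[OF tree] centre_in uv by blast
  have P_ne: "P \<noteq> []" using path_not_Nil[OF P(1)] .
  then have "1 \<le> length P" by (simp add: Suc_le_eq)
  have "set P \<subseteq> N" using walk_in_graph[OF tree_graph[OF tree]] P centre_in uv by (auto simp: path_def)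
  then have "path (image_edges Inl N E) (map Inl P)" by (intro path_map_image[OF _ P(1)]) simp_all
  then have "walk edges (map Inl P)"
    by (auto simp: path_def edges_def attach_edges_def intro: walk_mono)
  moreover have "edges (Inr (u, 1)) (Inl (c u))" "edges (Inl (c v)) (Inr (v, 1))"
    using edges_parent[of "Inr (u, 1)"] edges_parent[of "Inr (v, 1)"] hair_pos uv by simp_all
  moreover have "walk edges (rev (hair u))"
    using walk_rev[OF graphD(5)[OF tree_graph[OF tree_nodes]] hair_path(1)[OF uv(1)]] by blast
  ultimately have "walk edges (rev (hair u) @ map Inl P @ hair v)"
    using hair_path[OF uv(1)] hair_path[OF uv(2)] P P_ne by (simp add: walk_append last_rev hd_map last_map)
  moreover have "distinct (rev (hair u) @ map Inl P @ hair v)"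
    using hair_path[OF uv(1)] hair_path[OF uv(2)] uv(3) P(1) by (auto simp: path_def distinct_map)
  ultimately have Q: "path edges (rev (hair u) @ map Inl P @ hair v)" by (simp add: path_def)
  have "tdist E (c u) (c v) = length P - 1" using tdist_path[OF tree P(1)] P centre_in uv by simp
  moreover have "tip u \<in> nodes" using uv(1) hair_pos[OF uv(1)] by (simp add: tip_def nodes_def)
  ultimately show ?thesis
    using tdist_path[OF tree_nodes Q] hair_path[OF uv(1)] hair_path[OF uv(2)] P_ne \<open>1 \<le> length P\<close>
    by (simp add: hd_rev)
qed

lemma tip_in_leaves:
  assumes "v \<in> V"
  shows "tip v \<in> leaves nodes edges"
proof -
  have "{y \<in> nodes. edges (tip v) y} \<subseteq> {parent (tip v)}"
  proof
    fix y assume "y \<in> {y \<in> nodes. edges (tip v) y}"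
    then have "edges (tip v) y" by blast
    moreover have "\<not> image_edges Inl N E (tip v) y" by (auto simp: image_edges_def tip_def)
    moreover have "tip v \<noteq> parent y" if "y \<in> hairs"
      using that by (auto elim!: hairs_cases simp: tip_def split: if_splits)
    ultimately show "y \<in> {parent (tip v)}" by (auto simp: edges_def attach_edges_def)
  qed
  then have "card {y \<in> nodes. edges (tip v) y} \<le> 1"
    using card_mono[of "{parent (tip v)}"] by simp
  moreover have "tip v \<in> nodes" using assms hair_pos[OF assms] by (simp add: tip_def nodes_def)
  ultimately show ?thesis by (simp add: leaves_def)
qed

lemma finite_nodes: "finite nodes"
  using graphD(1)[OF tree_graph[OF tree]] finite_hairs by (simp add: nodes_def)

lemma inner_hair_not_leaf:
  assumes "v \<in> V" "1 \<le> i" "i < p v"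
  shows "Inr (v, i) \<notin> leaves nodes edges"
proof -
  let ?z = "Inr (v, i)" and ?child = "Inr (v, Suc i)"
  have hairs: "?z \<in> hairs" "?child \<in> hairs" using assms by simp_all
  have "parent ?z \<in> nodes" using parent_in_nodes[OF hairs(1)] .
  moreover have "?child \<in> nodes" using hairs(2) by (simp add: nodes_def)
  moreover have "parent ?z \<noteq> ?child" by auto
  moreover have "edges ?z (parent ?z)" using edges_parent(1)[OF hairs(1)] .
  moreover have "edges ?z ?child" using edges_parent(2)[OF hairs(2)] assms(2) by simp
  ultimately show ?thesis using two_neighbours_not_leaf[OF finite_nodes] by blast
qed

lemma tree_node_not_leaf:
  assumes V: "2 \<le> card V" and pruned: "2 \<le> card N \<Longrightarrow> leaves N E \<subseteq> c ` V" and t: "t \<in> N"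
  shows "Inl t \<notin> leaves nodes edges"
proof (cases "2 \<le> card N")
  case True
  obtain s where s: "E t s" using tree_has_neighbour[OF tree True t] .
  then have "s \<in> N" using graphD(4)[OF tree_graph[OF tree]] by blast
  show ?thesis
  proof (cases "t \<in> leaves N E")
    case True
    then obtain v where v: "v \<in> V" "c v = t" using pruned \<open>2 \<le> card N\<close> by blast
    then have "Inr (v, 1) \<in> hairs" using hair_pos by simp
    then have "edges (Inl t) (Inr (v, 1))" "Inr (v, 1) \<in> nodes"
      using edges_parent(2)[of "Inr (v, 1)"] v by (simp_all add: nodes_def)
    moreover have "edges (Inl t) (Inl s)" "Inl s \<in> nodes"
      using edges_Inl_Inl t \<open>s \<in> N\<close> s by (simp_all add: nodes_def)
    ultimately show ?thesis using two_neighbours_not_leaf[OF finite_nodes] by blast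
  next
    case False
    then have "\<not> card {y \<in> N. E t y} \<le> Suc 0" using t by (simp add: leaves_def)
    then obtain s1 s2 where "s1 \<in> N" "s2 \<in> N" "E t s1" "E t s2" "s1 \<noteq> s2"
      using card_le_Suc0_iff_eq[of "{y \<in> N. E t y}"] graphD(1)[OF tree_graph[OF tree]] by auto
    then show ?thesis
      using two_neighbours_not_leaf[OF finite_nodes, of "Inl s1" "Inl s2" edges "Inl t"]
        edges_Inl_Inl t by (simp add: nodes_def)
  qed
next
  case False
  obtain u v where uv: "u \<in> V" "v \<in> V" "u \<noteq> v"
    using V card_le_Suc0_iff_eq[OF finite_V] by (metis not_less_eq_eq numeral_2_eq_2)
  have "c u = t" "c v = t"
    using False card_le_Suc0_iff_eq[OF graphD(1)[OF tree_graph[OF tree]]] centre_in uv t by auto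
  then have "edges (Inl t) (Inr (u, 1))" "edges (Inl t) (Inr (v, 1))"
    "Inr (u, 1) \<in> nodes" "Inr (v, 1) \<in> nodes"
    using edges_parent(2)[of "Inr (u, 1)"] edges_parent(2)[of "Inr (v, 1)"] hair_pos uv
    by (simp_all add: nodes_def)
  then show ?thesis using two_neighbours_not_leaf[OF finite_nodes] uv(3) by blast
qed

lemma leaves_nodes:
  assumes "2 \<le> card V" and "2 \<le> card N \<Longrightarrow> leaves N E \<subseteq> c ` V"
  shows "leaves nodes edges = tip ` V"
proof
  show "tip ` V \<subseteq> leaves nodes edges" using tip_in_leaves by blast
  show "leaves nodes edges \<subseteq> tip ` V"
  proof
    fix z assume z: "z \<in> leaves nodes edges"
    then have "z \<in> nodes" by (simp add: leaves_def)
    then consider t where "z = Inl t" "t \<in> N" | v i where "z = Inr (v, i)" "v \<in> V" "1 \<le> i" "i \<le> p v"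
      by (auto simp: nodes_def elim!: hairs_cases)
    then show "z \<in> tip ` V"
    proof cases
      case 1
      then show ?thesis using tree_node_not_leaf[OF assms] z by blast
    next
      case 2
      then show ?thesis using inner_hair_not_leaf z by (cases "i = p v") (auto simp: tip_def)
    qed
  qed
qed

end

section \<open>Leaf powers from radial subtree models\<close>

lemma k_leaf_power_if_hairy:
  assumes "tree N E" "finite V" "2 \<le> card V" "\<And>v. v \<in> V \<Longrightarrow> c v \<in> N" "\<And>v. v \<in> V \<Longrightarrow> 1 \<le> p v"
    and pruned: "2 \<le> card N \<Longrightarrow> leaves N E \<subseteq> c ` V"
    and adj: "\<And>u v. u \<in> V \<Longrightarrow> v \<in> V \<Longrightarrow> u \<noteq> v \<Longrightarrow> G u v \<longleftrightarrow> p u + p v + tdist E (c u) (c v) \<le> k"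
  shows "k_leaf_power k V G"
proof -
  interpret hairy_tree N E V c p using assms by unfold_locales
  obtain f :: "_ \<Rightarrow> nat" where f: "inj_on f nodes"
    using finite_imp_inj_to_nat_seg[OF finite_nodes] by blast
  have tips: "tip ` V \<subseteq> nodes" using hair_pos by (auto simp: tip_def nodes_def)
  have "inj_on (f \<circ> tip) V"
    using comp_inj_on[OF _ inj_on_subset[OF f tips]] by (simp add: inj_on_def tip_def)
  moreover have "leaves (f ` nodes) (image_edges f nodes edges) = f ` tip ` V"
    using leaves_image[OF f] leaves_nodes[OF assms(3) pruned] by simp
  ultimately have "bij_betw (f \<circ> tip) V (leaves (f ` nodes) (image_edges f nodes edges))"
    by (simp add: bij_betw_def image_comp)
  moreover have "G u v \<longleftrightarrow> tdist (image_edges f nodes edges) ((f \<circ> tip) u) ((f \<circ> tip) v) \<le> k"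
    if "u \<in> V" "v \<in> V" "u \<noteq> v" for u v
  proof -
    have "tip u \<in> nodes" "tip v \<in> nodes" using tips that by auto
    then show ?thesis using tdist_image[OF tree_nodes f] tdist_tips[OF that] adj[OF that] by simp
  qed
  ultimately show ?thesis
    unfolding k_leaf_power_def using tree_image[OF tree_nodes f] by blast
qed

lemma k_leaf_power_if_ball_model:
  assumes T: "tree N E" and V: "finite V" "2 \<le> card V" and c: "\<And>v. v \<in> V \<Longrightarrow> c v \<in> N"
    and adj: "\<And>u v. u \<in> V \<Longrightarrow> v \<in> V \<Longrightarrow> u \<noteq> v \<Longrightarrow> G u v \<longleftrightarrow> tdist E (c u) (c v) \<le> r u + r v"
  shows "k_leaf_power (2 * Max (r ` V) + 2) V G"
proof -
  have "c ` V \<subseteq> N" using c by blast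
  then obtain N0 where N0: "c ` V \<subseteq> N0" "N0 \<subseteq> N" "tree N0 (induced E N0)"
    "2 \<le> card N0 \<Longrightarrow> leaves N0 (induced E N0) \<subseteq> c ` V"
    by (rule tree_prune[OF T]) blast
  define L where "L = Max (r ` V)"
  have r: "r v \<le> L" if "v \<in> V" for v using V(1) that by (simp add: L_def)
  have c0: "c v \<in> N0" if "v \<in> V" for v using N0(1) that by blast
  have threshold: "G u v \<longleftrightarrow> (L + 1 - r u) + (L + 1 - r v) + tdist (induced E N0) (c u) (c v) \<le> 2 * L + 2"
    if "u \<in> V" "v \<in> V" "u \<noteq> v" for u v
    using adj[OF that] tdist_induced[OF T N0(3,2) c0 c0] r[OF that(1)] r[OF that(2)] that by auto
  have hair_pos: "1 \<le> L + 1 - r v" if "v \<in> V" for v using r[OF that] by simp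
  have "k_leaf_power (2 * L + 2) V G"
    by (rule k_leaf_power_if_hairy[where p = "\<lambda>v. L + 1 - r v", OF N0(3) V c0 hair_pos N0(4) threshold])
  then show ?thesis by (simp add: L_def)
qed

lemma leaf_power_singleton: "leaf_power {v} G"
proof -
  have "tree {0::nat} (\<lambda>_ _. False)"
    by (simp add: tree_def graph_def unique_path_to_self)
  moreover have "leaves {0::nat} (\<lambda>_ _. False) = {0}" by (simp add: leaves_def)
  ultimately have "k_leaf_power 1 {v} G" unfolding k_leaf_power_def
    by (intro exI[of _ "{0::nat}"] exI[of _ "\<lambda>_ _. False"] exI[of _ "\<lambda>_. 0::nat"]) (simp add: bij_betw_def)
  then show ?thesis unfolding leaf_power_def by blast
qed

lemma leaf_power_if_ball_model:
  assumes T: "tree N E" and V: "finite V" "V \<noteq> {}" and c: "\<And>v. v \<in> V \<Longrightarrow> c v \<in> N"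
    and adj: "\<And>u v. u \<in> V \<Longrightarrow> v \<in> V \<Longrightarrow> u \<noteq> v \<Longrightarrow> G u v \<longleftrightarrow> tdist E (c u) (c v) \<le> r u + r v"
  shows "leaf_power V G"
proof (cases "2 \<le> card V")
  case True
  then have "k_leaf_power (2 * Max (r ` V) + 2) V G"
    by (rule k_leaf_power_if_ball_model[OF T V(1) _ c adj])
  then show ?thesis unfolding leaf_power_def by (intro exI[of _ "2 * Max (r ` V) + 2"]) simp
next
  case False
  \<comment> \<open>With a single vertex, the base of its hair would be a second leaf.\<close>
  moreover have "0 < card V" using V by (simp add: card_gt_0_iff)
  ultimately have "card V = 1" by linarith
  then obtain v where "V = {v}" by (rule card_1_singletonE)
  then show ?thesis by (simp add: leaf_power_singleton)
qed

theorem lemma2: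
  fixes V :: "'a set" and G :: "'a \<Rightarrow> 'a \<Rightarrow> bool"
    and N :: "'b set" and E :: "'b \<Rightarrow> 'b \<Rightarrow> bool" and S :: "'a \<Rightarrow> 'b set"
  assumes "graph V G"
    and "radial_subtree_model V G N E S"
  shows "leaf_power V G"
proof -
  have T: "tree N E" and adj: "\<And>u v. u \<in> V \<Longrightarrow> v \<in> V \<Longrightarrow> u \<noteq> v \<Longrightarrow> S u \<inter> S v \<noteq> {} \<longleftrightarrow> G u v"
    using assms(2) unfolding radial_subtree_model_def subtree_model_def by blast+
  have "\<forall>v\<in>V. \<exists>c. c \<in> N \<and> (\<exists>r. S v = {t \<in> N. tdist E c t \<le> r})"
    using assms(2) unfolding radial_subtree_model_def by blast
  from bchoice[OF this] obtain c
    where c: "\<forall>v\<in>V. c v \<in> N \<and> (\<exists>r. S v = {t \<in> N. tdist E (c v) t \<le> r})" ..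
  then have "\<forall>v\<in>V. \<exists>r. S v = {t \<in> N. tdist E (c v) t \<le> r}" by blast
  from bchoice[OF this] obtain r where "\<forall>v\<in>V. S v = {t \<in> N. tdist E (c v) t \<le> r v}" ..
  with c have centre: "c v \<in> N" and ball: "S v = {t \<in> N. tdist E (c v) t \<le> r v}"
    if "v \<in> V" for v
    using that by blast+
  have G_iff: "G u v \<longleftrightarrow> tdist E (c u) (c v) \<le> r u + r v" if "u \<in> V" "v \<in> V" "u \<noteq> v" for u v
    using adj[OF that] ball[OF that(1)] ball[OF that(2)] tree_balls_intersect_iff[OF T] centre that
    by simp
  show ?thesis using leaf_power_if_ball_model[OF T graphD(1,2)[OF assms(1)] centre G_iff] .
qed

end
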